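(* Let $\mathbf{G}\in\mathbb{F}_2^{m\times n}$ be a triorthogonal matrix with linearly independent rows, written (after row permutation) as $\mathbf{G}=\begin{bmatrix}\mathbf{G}_1\\ \mathbf{G}_0\end{bmatrix}$, where $\mathbf{G}_1\in\mathbb{F}_2^{k\times n}$ consists of the odd-weight rows and $\mathbf{G}_0$ of the even-weight rows of $\mathbf{G}$. Let $\mathcal{Q}^T=\mathrm{CSS}(\mathcal{C}_1,\mathcal{C}_2)$ be the associated triorthogonal code, where $\mathcal{C}_1$ is the binary code generated by $\mathbf{G}$ and $\mathcal{C}_2$ is the dual of the code generated by $\mathbf{G}_0$. Then $\mathcal{Q}^T$ is CZ-transversal: for all $\bm{\psi},\bm{\phi}\in\mathbb{F}_2^k$, $$\mathbf{CZ}^{\otimes n}\big(|\bm{\psi}\rangle_L\otimes|\bm{\phi}\rangle_L\big)=(-1)^{\bm{\psi}\cdot\bm{\phi}}\,|\bm{\psi}\rangle_L\otimes|\bm{\phi}\rangle_L,$$ where $\mathbf{CZ}^{\otimes n}$ applies a physical controlled-$Z$ gate between qubit $i$ of the first block and qubit $i$ of the second block for every $i=1,\dots,n$; i.e., transversal CZ implements the logical CZ between corresponding logical qubits of the two code blocks.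
   Context: A binary matrix $\mathbf{G}=[G_{ij}]\in\mathbb{F}_2^{m\times n}$ is triorthogonal if $\sum_{i=1}^n G_{ai}G_{bi}=0 \pmod 2$ for all rows $a\neq b$, and $\sum_{i=1}^n G_{ai}G_{bi}G_{ci}=0\pmod 2$ for all distinct rows $a,b,c$. For binary linear codes $\mathcal{C}_1,\mathcal{C}_2\subseteq\mathbb{F}_2^n$ with $\mathcal{C}_2^\perp\subset\mathcal{C}_1$, the CSS code $\mathrm{CSS}(\mathcal{C}_1,\mathcal{C}_2)$ is the span of the logical basis states $|\bm{\psi}\rangle_L=|\mathcal{C}_2^\perp|^{-1/2}\sum_{\mathbf{y}\in\mathcal{C}_2^\perp}|\bm{\psi}\mathbf{A}+\mathbf{y}\rangle$, $\bm{\psi}\in\mathbb{F}_2^k$, where $\mathbf{A}\in\mathbb{F}_2^{k\times n}$ is a full-rank mapping matrix whose rows represent a basis of $\mathcal{C}_1/\mathcal{C}_2^\perp$. For the triorthogonal code $\mathcal{Q}^T$ the mapping matrix is $\mathbf{A}=\mathbf{G}_1$, and $k$ equals the number of rows of $\mathbf{G}_1$. The $\mathbf{CZ}$ gate is $\mathrm{diag}(1,1,1,-1)$. *)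

theory Defs
  imports Complex_Main "HOL-Library.Z2"
begin

text \<open>A binary m x n matrix is a function nat => nat => bit; only entries with
  row index < m and column index < n are relevant.\<close>

definition vecs :: "nat \<Rightarrow> (nat \<Rightarrow> bit) set" where
  "vecs n = {x. \<forall>j\<ge>n. x j = 0}"

definition dotp :: "nat \<Rightarrow> (nat \<Rightarrow> bit) \<Rightarrow> (nat \<Rightarrow> bit) \<Rightarrow> bit" where
  "dotp n x y = (\<Sum>j<n. x j * y j)"

text \<open>Row vector times matrix: psi A, where A consists of rows r0..<r1 of G,
  psi indexed by 0..<(r1-r0).\<close>
definition vecmat :: "nat \<Rightarrow> nat \<Rightarrow> nat \<Rightarrow> (nat \<Rightarrow> nat \<Rightarrow> bit) \<Rightarrow> (nat \<Rightarrow> bit) \<Rightarrow> (nat \<Rightarrow> bit)" where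
  "vecmat n r0 r1 G c = (\<lambda>j. if j < n then (\<Sum>i\<in>{r0..<r1}. c (i - r0) * G i j) else 0)"

definition rowspan :: "nat \<Rightarrow> nat \<Rightarrow> nat \<Rightarrow> (nat \<Rightarrow> nat \<Rightarrow> bit) \<Rightarrow> (nat \<Rightarrow> bit) set" where
  "rowspan n r0 r1 G = {vecmat n r0 r1 G c | c. c \<in> vecs (r1 - r0)}"

definition dual_code :: "nat \<Rightarrow> (nat \<Rightarrow> bit) set \<Rightarrow> (nat \<Rightarrow> bit) set" where
  "dual_code n C = {x \<in> vecs n. \<forall>y\<in>C. dotp n x y = 0}"

definition weight :: "nat \<Rightarrow> (nat \<Rightarrow> bit) \<Rightarrow> nat" where
  "weight n x = card {j. j < n \<and> x j \<noteq> 0}"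

definition triorthogonal :: "nat \<Rightarrow> nat \<Rightarrow> (nat \<Rightarrow> nat \<Rightarrow> bit) \<Rightarrow> bool" where
  "triorthogonal m n G \<longleftrightarrow>
     (\<forall>a<m. \<forall>b<m. a \<noteq> b \<longrightarrow> (\<Sum>i<n. G a i * G b i) = 0) \<and>
     (\<forall>a<m. \<forall>b<m. \<forall>c<m. a \<noteq> b \<and> a \<noteq> c \<and> b \<noteq> c \<longrightarrow>
        (\<Sum>i<n. G a i * G b i * G c i) = 0)"

definition rows_lin_indep :: "nat \<Rightarrow> nat \<Rightarrow> (nat \<Rightarrow> nat \<Rightarrow> bit) \<Rightarrow> bool" where
  "rows_lin_indep m n G \<longleftrightarrow>
     (\<forall>c. (\<forall>j<n. (\<Sum>i<m. c i * G i j) = 0) \<longrightarrow> (\<forall>i<m. c i = 0))"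

text \<open>An n-qubit state: amplitude function on computational basis labels
  (elements of vecs n; amplitudes outside are zero for the states considered).\<close>
type_synonym state = "(nat \<Rightarrow> bit) \<Rightarrow> complex"
type_synonym state2 = "((nat \<Rightarrow> bit) \<times> (nat \<Rightarrow> bit)) \<Rightarrow> complex"

definition logical_state :: "nat \<Rightarrow> nat \<Rightarrow> nat \<Rightarrow> (nat \<Rightarrow> nat \<Rightarrow> bit) \<Rightarrow> (nat \<Rightarrow> bit) set \<Rightarrow> (nat \<Rightarrow> bit) \<Rightarrow> state" where
  "logical_state n r0 r1 A C2perp psi =
     (\<lambda>x. (1 / csqrt (of_nat (card C2perp))) *
          (\<Sum>y\<in>C2perp. if (\<lambda>j. vecmat n r0 r1 A psi j + y j) = x then 1 else 0))"

definition tensor :: "state \<Rightarrow> state \<Rightarrow> state2" where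
  "tensor s t = (\<lambda>(x, y). s x * t y)"

definition sign :: "bit \<Rightarrow> complex" where
  "sign b = (if b = 0 then 1 else -1)"

text \<open>Transversal CZ: CZ between qubit i of block 1 and qubit i of block 2, i = 0..<n;
  diagonal in the computational basis with phase (-1)^(x . y).\<close>
definition CZ_transversal :: "nat \<Rightarrow> state2 \<Rightarrow> state2" where
  "CZ_transversal n S = (\<lambda>(x, y). sign (dotp n x y) * S (x, y))"

end

theory Submission
  imports Defs
begin

text \<open>The rows of G are pairwise orthogonal; the even-weight rows G0 are moreover
  self-orthogonal, so their span lies in C2, and so does the span of the odd-weight rows G1.
  Hence C2perp is contained in C2, and the inner product of two basis labels
  psi G1 + y and phi G1 + y' (y, y' in C2perp) collapses to (psi G1).(phi G1), which
  equals psi.phi because the rows of G1 are orthonormal. Transversal CZ therefore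
  multiplies every basis component of the product state by the same sign.\<close>

(* Z2 would otherwise rewrite the field operations on bit into XOR and AND. *)
declare add_bit_eq_xor[simp del] mult_bit_eq_and[simp del]

lemma bit_mult_self [simp]: "(b::bit) * b = b"
  by (cases b) simp_all

lemma of_nat_bit_eq: "(of_nat w :: bit) = (if even w then 0 else 1)"
  by (metis bit.exhaust even_of_nat even_zero odd_one)

lemma dotp_self_eq_weight_parity: "dotp n x x = (if even (weight n x) then 0 else 1)"
proof -
  have "dotp n x x = (\<Sum>j<n. x j)"
    by (simp add: dotp_def)
  also have "\<dots> = (\<Sum>j\<in>{j. j < n \<and> x j \<noteq> 0}. x j)"
    by (intro sum.mono_neutral_right) auto
  also have "\<dots> = (\<Sum>j\<in>{j. j < n \<and> x j \<noteq> 0}. 1)"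
    by (rule sum.cong) auto
  finally show ?thesis
    by (simp add: weight_def of_nat_bit_eq)
qed

lemma dotp_add_left: "dotp n (\<lambda>j. a j + b j) c = dotp n a c + dotp n b c"
  by (simp add: dotp_def distrib_right sum.distrib)

lemma dotp_commute: "dotp n a b = dotp n b a"
  by (simp add: dotp_def mult.commute)

lemma triorthogonal_rows_orthogonal:
  assumes "triorthogonal m n G" "a < m" "b < m" "a \<noteq> b"
  shows "dotp n (G a) (G b) = 0"
  using assms unfolding triorthogonal_def dotp_def by blast

lemma vecmat_in_vecs: "vecmat n r0 r1 G c \<in> vecs n"
  by (simp add: vecmat_def vecs_def)

lemma dotp_vecmat:
  "dotp n (vecmat n r0 r1 G c) (vecmat n s0 s1 G d) =
   (\<Sum>i\<in>{r0..<r1}. \<Sum>i'\<in>{s0..<s1}. c (i - r0) * d (i' - s0) * dotp n (G i) (G i'))"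
proof -
  have "dotp n (vecmat n r0 r1 G c) (vecmat n s0 s1 G d) =
     (\<Sum>j<n. (\<Sum>i\<in>{r0..<r1}. c (i - r0) * G i j) * (\<Sum>i'\<in>{s0..<s1}. d (i' - s0) * G i' j))"
    unfolding dotp_def vecmat_def by (rule sum.cong) auto
  also have "\<dots> = (\<Sum>j<n. \<Sum>i\<in>{r0..<r1}. \<Sum>i'\<in>{s0..<s1}.
                      c (i - r0) * d (i' - s0) * (G i j * G i' j))"
    by (simp add: sum_product mult_ac)
  also have "\<dots> = (\<Sum>i\<in>{r0..<r1}. \<Sum>i'\<in>{s0..<s1}. \<Sum>j<n.
                      c (i - r0) * d (i' - s0) * (G i j * G i' j))"
    by (subst sum.swap) (simp add: sum.swap[where A = "{..<n}"])
  also have "\<dots> = (\<Sum>i\<in>{r0..<r1}. \<Sum>i'\<in>{s0..<s1}. c (i - r0) * d (i' - s0) * dotp n (G i) (G i'))"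
    by (simp add: dotp_def sum_distrib_left)
  finally show ?thesis .
qed

lemma vecmat_in_dual_rowspan:
  assumes "\<And>i i'. i \<in> {r0..<r1} \<Longrightarrow> i' \<in> {s0..<s1} \<Longrightarrow> dotp n (G i) (G i') = 0"
  shows "vecmat n r0 r1 G c \<in> dual_code n (rowspan n s0 s1 G)"
proof -
  have "dotp n (vecmat n r0 r1 G c) (vecmat n s0 s1 G d) = 0" for d
    unfolding dotp_vecmat using assms by (intro sum.neutral ballI) simp
  then show ?thesis
    by (auto simp: dual_code_def rowspan_def vecmat_in_vecs)
qed

lemma rowspan_subset_dual_rowspan:
  assumes "\<And>i i'. i \<in> {r0..<r1} \<Longrightarrow> i' \<in> {s0..<s1} \<Longrightarrow> dotp n (G i) (G i') = 0"
  shows "rowspan n r0 r1 G \<subseteq> dual_code n (rowspan n s0 s1 G)"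
  using vecmat_in_dual_rowspan[where G = G, OF assms] unfolding rowspan_def[of n r0 r1] by blast

lemma dotp_vecmat_orthonormal_rows:
  assumes "\<And>i i'. i < k \<Longrightarrow> i' < k \<Longrightarrow> dotp n (G i) (G i') = (if i = i' then 1 else 0)"
  shows "dotp n (vecmat n 0 k G c) (vecmat n 0 k G d) = dotp k c d"
proof -
  have "dotp n (vecmat n 0 k G c) (vecmat n 0 k G d) =
        (\<Sum>i\<in>{0..<k}. \<Sum>i'\<in>{0..<k}. if i' = i then c i * d i else 0)"
    unfolding dotp_vecmat using assms by (intro sum.cong refl) auto
  also have "\<dots> = dotp k c d"
    by (simp add: dotp_def atLeast0LessThan)
  finally show ?thesis .
qed

lemma dual_code_antimono: "C \<subseteq> C' \<Longrightarrow> dual_code n C' \<subseteq> dual_code n C"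
  unfolding dual_code_def by blast

lemma dotp_coset_invariant:
  assumes "a \<in> C" "b \<in> C" "y \<in> dual_code n C" "y' \<in> dual_code n C"
    and "dual_code n C \<subseteq> C"
  shows "dotp n (\<lambda>j. a j + y j) (\<lambda>j. b j + y' j) = dotp n a b"
proof -
  have "dotp n y' a = 0" "dotp n b y = 0" "dotp n y' y = 0"
    using assms by (auto simp: dual_code_def dotp_commute[of n b])
  then show ?thesis
    by (simp add: dotp_add_left dotp_commute[of n _ "\<lambda>j. b j + y' j"] dotp_commute[of n b a])
qed

lemma logical_state_support:
  assumes "logical_state n r0 r1 A S c w \<noteq> 0"
  obtains y where "y \<in> S" "w = (\<lambda>j. vecmat n r0 r1 A c j + y j)"
proof (rule ccontr)
  assume "\<not> thesis"
  with that have "(\<Sum>y\<in>S. if (\<lambda>j. vecmat n r0 r1 A c j + y j) = w then (1::complex) else 0) = 0"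
    by (intro sum.neutral) auto
  with assms show False
    unfolding logical_state_def by simp
qed

lemma CZ_transversal_tensor_const_phase:
  assumes "\<And>x z. S x \<noteq> 0 \<Longrightarrow> T z \<noteq> 0 \<Longrightarrow> dotp n x z = s"
  shows "CZ_transversal n (tensor S T) = (\<lambda>w. sign s * tensor S T w)"
  unfolding CZ_transversal_def tensor_def
  using assms by (force simp: fun_eq_iff)

lemma CZ_transversal_logical_states:
  assumes "\<And>c. vecmat n r0 r1 A c \<in> C" and "dual_code n C \<subseteq> C"
  shows "CZ_transversal n (tensor (logical_state n r0 r1 A (dual_code n C) psi)
                                  (logical_state n r0 r1 A (dual_code n C) phi))
       = (\<lambda>w. sign (dotp n (vecmat n r0 r1 A psi) (vecmat n r0 r1 A phi)) *
              tensor (logical_state n r0 r1 A (dual_code n C) psi)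
                     (logical_state n r0 r1 A (dual_code n C) phi) w)"
proof (rule CZ_transversal_tensor_const_phase)
  fix x z
  assume "logical_state n r0 r1 A (dual_code n C) psi x \<noteq> 0"
    and "logical_state n r0 r1 A (dual_code n C) phi z \<noteq> 0"
  then obtain y y' where y: "y \<in> dual_code n C" "x = (\<lambda>j. vecmat n r0 r1 A psi j + y j)"
    and y': "y' \<in> dual_code n C" "z = (\<lambda>j. vecmat n r0 r1 A phi j + y' j)"
    by (elim logical_state_support)
  show "dotp n x z = dotp n (vecmat n r0 r1 A psi) (vecmat n r0 r1 A phi)"
    unfolding y(2) y'(2) by (rule dotp_coset_invariant[OF assms(1) assms(1) y(1) y'(1) assms(2)])
qed

theorem theorem1:
  fixes m n k :: nat and G :: "nat \<Rightarrow> nat \<Rightarrow> bit"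
  assumes tri: "triorthogonal m n G"
    and indep: "rows_lin_indep m n G"
    and km: "k \<le> m"
    and odd_rows: "\<forall>a<k. odd (weight n (G a))"
    and even_rows: "\<forall>a. k \<le> a \<and> a < m \<longrightarrow> even (weight n (G a))"
  defines "C1 \<equiv> rowspan n 0 m G"
    and "C2 \<equiv> dual_code n (rowspan n k m G)"
  shows "\<forall>psi\<in>vecs k. \<forall>phi\<in>vecs k.
           CZ_transversal n (tensor (logical_state n 0 k G (dual_code n C2) psi)
                                    (logical_state n 0 k G (dual_code n C2) phi))
         = (\<lambda>z. sign (dotp k psi phi) *
                tensor (logical_state n 0 k G (dual_code n C2) psi)
                       (logical_state n 0 k G (dual_code n C2) phi) z)"
proof -
  note orth = triorthogonal_rows_orthogonal[OF tri]
  have "dotp n (G i) (G i') = 0" if "i \<in> {k..<m}" "i' \<in> {k..<m}" for i i'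
    using that orth even_rows by (cases "i = i'") (auto simp: dotp_self_eq_weight_parity)
  then have G0_C2: "rowspan n k m G \<subseteq> C2"
    unfolding C2_def by (rule rowspan_subset_dual_rowspan)
  have G1_C2: "vecmat n 0 k G c \<in> C2" for c
    unfolding C2_def using orth km by (intro vecmat_in_dual_rowspan) auto
  have "dual_code n C2 \<subseteq> C2"
    using dual_code_antimono[OF G0_C2] by (simp add: C2_def)
  note CZ = CZ_transversal_logical_states[OF G1_C2 this]
  have "dotp n (vecmat n 0 k G psi) (vecmat n 0 k G phi) = dotp k psi phi" for psi phi
    using orth km odd_rows
    by (intro dotp_vecmat_orthonormal_rows) (auto simp: dotp_self_eq_weight_parity)
  with CZ show ?thesis
    by simp
qed

end
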